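(* Let $\Gamma=(G,\sigma)$ be a signed graph with $G=(V,E)$, and let $\Gamma'=(G',\sigma)$, where $G'=(V',E')$ is the induced subgraph of $G$ obtained by removing $k$ vertices from $G$. If $G'$ has a minimum edge cover of cardinality $\beta'$, then $$L_{\beta'+k+1}(\Gamma)\ \ge\ \frac12\,\frac{w_{\min}}{\mu_{\max}}>0,$$ where $w_{\min}:=\min_{e\in E}w_e$ and $\mu_{\max}:=\max_{i\in V}\mu_i$.
   Context: $G=(V,E)$ is a finite undirected graph without self-loops (isolated vertices allowed), $V=\{1,\dots,n\}$. An edge cover is a set of edges such that every vertex is incident to one of them. A signed graph $\Gamma=(G,\sigma)$ has signature $\sigma:E\to\{\pm1\}$, edge weight $w:E\to(0,\infty)$, vertex measure $\mu:V\to(0,\infty)$, potential $\kappa:V\to\mathbb R$. For $p\ge1$ and nonzero $f$, $\mathcal R_p^\sigma(f)=\frac{\sum_{\{i,j\}\in E}w_{ij}|f(i)-\sigma_{ij}f(j)|^p+\sum_i\kappa_i|f(i)|^p}{\sum_i\mu_i|f(i)|^p}$; $\mathcal S_p=\{f:\sum_i\mu_i|f(i)|^p=1\}$; Krasnoselskii genus $\gamma(B)$ of closed symmetric $B\subset\mathbb R^n\setminus\{0\}$: least $k$ with an odd continuous map $B\to\mathbb R^k\setminus\{0\}$; $\mathcal F_k(\mathcal S_p)$ = closed symmetric $B\subset\mathcal S_p$ with $\gamma(B)\ge k$; $\lambda_k^{(p)}=\min_{B\in\mathcal F_k(\mathcal S_p)}\max_{f\in B}\mathcal R_p^\sigma(f)$.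 Cut-off adjacency eigenvalues: $L_k(\Gamma):=\lim_{p\to\infty}2^{-p}\lambda_k^{(p)}(\Gamma)$ (limits exist, independent of $\kappa$). *)

theory Defs
  imports "HOL-Analysis.Analysis"
begin

text \<open>Vertices are the elements of a finite type 'n (so V = UNIV, |V| = CARD('n));
  functions on V are vectors in real^'n.\<close>

definition is_edge_set :: "'n set set \<Rightarrow> bool" where
  "is_edge_set E \<longleftrightarrow> (\<forall>e\<in>E. card e = 2)"

text \<open>For an edge e = {i,j}: |f(i) - sigma_e f(j)|^p, written symmetrically
  (the expression is symmetric in i,j since sigma_e = +-1).\<close>
definition edge_term :: "(('n::finite) set \<Rightarrow> real) \<Rightarrow> real \<Rightarrow> real^'n \<Rightarrow> 'n set \<Rightarrow> real" where
  "edge_term \<sigma> p f e = (\<Sum>i\<in>e. \<Sum>j\<in>e - {i}. \<bar>f$i - \<sigma> e * f$j\<bar> powr p) / 2"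

definition rayleigh ::
  "('n::finite) set set \<Rightarrow> ('n set \<Rightarrow> real) \<Rightarrow> ('n set \<Rightarrow> real) \<Rightarrow> ('n \<Rightarrow> real) \<Rightarrow> ('n \<Rightarrow> real)
   \<Rightarrow> real \<Rightarrow> (real^'n) \<Rightarrow> real" where
  "rayleigh E \<sigma> w \<mu> \<kappa> p f =
     ((\<Sum>e\<in>E. w e * edge_term \<sigma> p f e) + (\<Sum>i\<in>UNIV. \<kappa> i * \<bar>f$i\<bar> powr p))
     / (\<Sum>i\<in>UNIV. \<mu> i * \<bar>f$i\<bar> powr p)"

definition p_sphere :: "(('n::finite) \<Rightarrow> real) \<Rightarrow> real \<Rightarrow> (real^'n) set" where
  "p_sphere \<mu> p = {f. (\<Sum>i\<in>UNIV. \<mu> i * \<bar>f$i\<bar> powr p) = 1}"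

text \<open>Krasnoselskii genus: gamma(B) >= k iff there is no m < k and odd continuous
  map B -> R^m \ {0}; such a map is given by its m real components g 0, ..., g (m-1).\<close>
definition genus_ge :: "(real^('n::finite)) set \<Rightarrow> nat \<Rightarrow> bool" where
  "genus_ge B k \<longleftrightarrow>
     \<not> (\<exists>m<k. \<exists>g :: nat \<Rightarrow> real^'n \<Rightarrow> real.
           (\<forall>i<m. continuous_on B (g i) \<and> (\<forall>x\<in>B. g i (- x) = - g i x))
         \<and> (\<forall>x\<in>B. \<exists>i<m. g i x \<noteq> 0))"

definition genus_family :: "(('n::finite) \<Rightarrow> real) \<Rightarrow> real \<Rightarrow> nat \<Rightarrow> (real^'n) set set" where
  "genus_family \<mu> p k =
     {B. B \<subseteq> p_sphere \<mu> p \<and> closed B \<and> (\<forall>x\<in>B. - x \<in> B) \<and> genus_ge B k}"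

text \<open>Variational eigenvalue lambda_k^(p) (min-max, as Inf/Sup in ereal; Inf {} = \<infinity>).\<close>
definition var_eig ::
  "('n::finite) set set \<Rightarrow> ('n set \<Rightarrow> real) \<Rightarrow> ('n set \<Rightarrow> real) \<Rightarrow> ('n \<Rightarrow> real) \<Rightarrow> ('n \<Rightarrow> real)
   \<Rightarrow> real \<Rightarrow> nat \<Rightarrow> ereal" where
  "var_eig E \<sigma> w \<mu> \<kappa> p k =
     (INF B\<in>genus_family \<mu> p k. SUP f\<in>B. ereal (rayleigh E \<sigma> w \<mu> \<kappa> (p::real) (f :: real^'n)))"

definition cutoff_eig ::
  "('n::finite) set set \<Rightarrow> ('n set \<Rightarrow> real) \<Rightarrow> ('n set \<Rightarrow> real) \<Rightarrow> ('n \<Rightarrow> real) \<Rightarrow> ('n \<Rightarrow> real)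
   \<Rightarrow> nat \<Rightarrow> ereal" where
  "cutoff_eig E \<sigma> w \<mu> \<kappa> k =
     Lim at_top (\<lambda>p::real. ereal (2 powr (- p)) * var_eig E \<sigma> w \<mu> (\<kappa>::'n \<Rightarrow> real) p k)"

definition edge_cover :: "'n set \<Rightarrow> 'n set set \<Rightarrow> 'n set set \<Rightarrow> bool" where
  "edge_cover V E C \<longleftrightarrow> C \<subseteq> E \<and> (\<forall>v\<in>V. \<exists>e\<in>C. v \<in> e)"

definition min_edge_cover :: "'n set \<Rightarrow> 'n set set \<Rightarrow> 'n set set \<Rightarrow> bool" where
  "min_edge_cover V E C \<longleftrightarrow> edge_cover V E C \<and>
     (\<forall>C'. edge_cover V E C' \<longrightarrow> card C \<le> card C')"

end

theory Submission
  imports Defs "HOL-Real_Asymp.Real_Asymp"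
begin

(* Write lambda_p for the (beta'+k+1)-th variational eigenvalue and M for the sum of the
   |kappa_i| / mu_i, which bounds the potential term on the p-sphere.

   Lower bound: a set of genus at least beta'+k+1 contains a common zero f of the k+beta'
   odd linear forms f(v) (v removed) and f(a) + sigma_ab f(b) ({a,b} in the edge cover).
   On each cover edge |f(a) - sigma_ab f(b)|^p = 2^p |f(a)|^p = 2^p |f(b)|^p, and since the
   cover meets every vertex where f is nonzero, the edge energy of f is at least
   2^p w_min / (2 mu_max); hence lambda_p >= 2^p w_min / (2 mu_max) - M.

   Existence of the limit: the coordinatewise signed power f |-> sgn f |f|^(p/q) is an odd
   homeomorphism from the p-sphere onto the q-sphere, so it preserves genus, and as x |-> |x|^r
   is r-Hoelder it gives R_q(Tf) + M <= 2^(q-p) (R_p(f) + M). Thus 2^(-p) (lambda_p + M) is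
   nonincreasing in p, converges, and its limit is that of 2^(-p) lambda_p. *)

section \<open>Two inequalities for concave powers\<close>

lemma add_powr_le_two_powr:
  fixes a b r :: real
  assumes "0 \<le> a" "0 \<le> b" "0 < r" "r \<le> 1"
  shows "a powr r + b powr r \<le> 2 powr (1 - r) * (a + b) powr r"
proof (cases "a + b = 0")
  case True
  then have "a = 0" "b = 0" using assms by auto
  then show ?thesis by simp
next
  case False
  define m where "m = (a + b) / 2"
  have m: "m > 0" using False assms by (simp add: m_def)
  have tangent: "(x / m) powr r \<le> r * (x / m) + (1 - r)" if "0 \<le> x" for x
    using Youngs_inequality_0[of r "1 - r" "x / m" 1] that assms m
    by (cases "x = 0") auto
  have "a powr r + b powr r = m powr r * ((a / m) powr r + (b / m) powr r)"
    using assms m by (simp add: powr_divide distrib_left)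
  also have "\<dots> \<le> m powr r * 2"
  proof (rule mult_left_mono)
    have "(a + b) / m = 2" using False by (simp add: m_def field_simps)
    then have "r * (a / m) + r * (b / m) = 2 * r"
      by (metis add_divide_distrib distrib_left mult.commute)
    then show "(a / m) powr r + (b / m) powr r \<le> 2"
      using tangent[OF assms(1)] tangent[OF assms(2)] by linarith
  qed simp
  also have "m powr r * 2 = 2 powr (1 - r) * (a + b) powr r"
    using assms by (simp add: m_def powr_divide powr_diff)
  finally show ?thesis .
qed

lemma powr_add_le_add_powr:
  fixes a b r :: real
  assumes "0 \<le> a" "0 \<le> b" "0 < r" "r \<le> 1"
  shows "(a + b) powr r \<le> a powr r + b powr r"
proof (cases "a + b = 0")
  case True
  then have "a = 0" "b = 0" using assms by auto
  then show ?thesis by simp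
next
  case False
  define s where "s = a + b"
  have s: "s > 0" using False assms by (simp add: s_def)
  have le_powr: "x / s \<le> (x / s) powr r" if "0 \<le> x" "x \<le> s" for x
    using powr_mono'[of r 1 "x / s"] that assms s by simp
  have "(a + b) powr r = s powr r * (a / s + b / s)"
    using s by (simp add: s_def add_divide_distrib[symmetric])
  also have "\<dots> \<le> s powr r * ((a / s) powr r + (b / s) powr r)"
    using le_powr[of a] le_powr[of b] assms by (intro mult_left_mono add_mono) (auto simp: s_def)
  also have "\<dots> = a powr r + b powr r"
    using assms s by (simp add: powr_divide distrib_left)
  finally show ?thesis .
qed

lemma abs_powr_diff_le:
  fixes x y r :: real
  assumes "0 \<le> x" "0 \<le> y" "0 < r" "r \<le> 1"
  shows "\<bar>x powr r - y powr r\<bar> \<le> \<bar>x - y\<bar> powr r"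
proof -
  have ordered: "\<bar>u powr r - v powr r\<bar> \<le> \<bar>u - v\<bar> powr r" if "0 \<le> v" "v \<le> u" for u v :: real
  proof -
    have "u powr r \<le> (u - v) powr r + v powr r"
      using powr_add_le_add_powr[of "u - v" v r] that assms(3,4) by simp
    moreover have "v powr r \<le> u powr r" using that assms(3) by (simp add: powr_mono2)
    ultimately show ?thesis using that by simp
  qed
  show ?thesis
    using ordered[of y x] ordered[of x y] assms(1,2) by (cases "y \<le> x") (auto simp: abs_minus_commute)
qed

section \<open>The signed power and its action on vectors\<close>

(* sgn x * |x| powr r, written with max so that continuity at 0 is immediate *)
definition signed_powr :: "real \<Rightarrow> real \<Rightarrow> real" where
  "signed_powr r x = max x 0 powr r - max (- x) 0 powr r"

lemma signed_powr_minus: "signed_powr r (- x) = - signed_powr r x"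
  by (simp add: signed_powr_def)

lemma abs_signed_powr: "\<bar>signed_powr r x\<bar> = \<bar>x\<bar> powr r"
  by (cases "x \<ge> 0") (auto simp: signed_powr_def max_def)

lemma signed_powr_inverse:
  assumes "r > 0"
  shows "signed_powr (1 / r) (signed_powr r x) = x"
  using assms by (cases "x \<ge> 0") (auto simp: signed_powr_def max_def powr_powr)

lemma continuous_on_signed_powr: "r > 0 \<Longrightarrow> continuous_on A (signed_powr r)"
  unfolding signed_powr_def by (intro continuous_intros continuous_on_powr') auto

lemma signed_powr_hoelder:
  fixes u v r :: real
  assumes "0 < r" "r \<le> 1"
  shows "\<bar>signed_powr r u - signed_powr r v\<bar> \<le> 2 powr (1 - r) * \<bar>u - v\<bar> powr r"
proof -
  have "1 \<le> 2 powr (1 - r)" using assms by (simp add: ge_one_powr_ge_zero)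
  then have same_sign: "\<bar>x powr r - y powr r\<bar> \<le> 2 powr (1 - r) * \<bar>x - y\<bar> powr r"
    if "0 \<le> x" "0 \<le> y" for x y :: real
    using abs_powr_diff_le[OF that assms] by (smt (verit) mult_le_cancel_right1 powr_ge_zero)
  have opposite_sign: "x powr r + y powr r \<le> 2 powr (1 - r) * \<bar>x + y\<bar> powr r"
    if "0 \<le> x" "0 \<le> y" for x y :: real
    using add_powr_le_two_powr[OF that assms] that by simp
  show ?thesis
  proof (cases "0 \<le> u"; cases "0 \<le> v")
    assume "0 \<le> u" "0 \<le> v"
    then show ?thesis using same_sign[of u v] by (simp add: signed_powr_def)
  next
    assume "0 \<le> u" "\<not> 0 \<le> v"
    then show ?thesis using opposite_sign[of u "- v"] by (simp add: signed_powr_def)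
  next
    assume "\<not> 0 \<le> u" "0 \<le> v"
    then show ?thesis using opposite_sign[of "- u" v] by (simp add: signed_powr_def abs_minus_commute)
  next
    assume "\<not> 0 \<le> u" "\<not> 0 \<le> v"
    then show ?thesis using same_sign[of "- u" "- v"] by (simp add: signed_powr_def abs_minus_commute)
  qed
qed

definition signed_powr_vec :: "real \<Rightarrow> real^'n \<Rightarrow> real^'n" where
  "signed_powr_vec r f = (\<chi> i. signed_powr r (f $ i))"

lemma signed_powr_vec_nth [simp]: "signed_powr_vec r f $ i = signed_powr r (f $ i)"
  by (simp add: signed_powr_vec_def)

lemma signed_powr_vec_minus: "signed_powr_vec r (- f) = - signed_powr_vec r f"
  by (simp add: vec_eq_iff signed_powr_minus)

lemma signed_powr_vec_inverse: "r > 0 \<Longrightarrow> signed_powr_vec (1 / r) (signed_powr_vec r f) = f"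
  by (simp add: vec_eq_iff signed_powr_inverse)

lemma continuous_on_signed_powr_vec:
  assumes "r > 0"
  shows "continuous_on A (signed_powr_vec r :: real^'n::finite \<Rightarrow> real^'n)"
  unfolding signed_powr_vec_def
  by (intro continuous_on_vec_lambda continuous_on_compose2[OF continuous_on_signed_powr[OF assms]]
      continuous_on_component continuous_on_id) auto

lemma closed_signed_powr_vec_image:
  fixes B :: "(real^'n::finite) set"
  assumes "r > 0" "closed B"
  shows "closed (signed_powr_vec r ` B)"
proof -
  have "signed_powr_vec r (signed_powr_vec (1 / r) g) = g" for g
    using signed_powr_vec_inverse[of "1 / r" g] assms(1) by simp
  then have "signed_powr_vec r ` B = signed_powr_vec (1 / r) -` B"
    using signed_powr_vec_inverse[OF assms(1)] by (auto intro: image_eqI[OF sym])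
  then show ?thesis
    using assms by (simp add: closed_vimage continuous_on_signed_powr_vec)
qed

lemma signed_powr_vec_p_sphere:
  assumes "p > 0" "q > 0" "f \<in> p_sphere \<mu> p"
  shows "signed_powr_vec (p / q) f \<in> p_sphere \<mu> q"
  using assms by (simp add: p_sphere_def abs_signed_powr powr_powr)

section \<open>Genus\<close>

lemma genus_ge_odd_map_zero:
  fixes B :: "(real^'n::finite) set" and g :: "nat \<Rightarrow> real^'n \<Rightarrow> real"
  assumes "genus_ge B k" "m < k"
    and "\<forall>i<m. continuous_on B (g i) \<and> (\<forall>x\<in>B. g i (- x) = - g i x)"
  shows "\<exists>x\<in>B. \<forall>i<m. g i x = 0"
proof (rule ccontr)
  assume "\<not> ?thesis"
  then have "\<forall>x\<in>B. \<exists>i<m. g i x \<noteq> 0" by blast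
  then show False using assms unfolding genus_ge_def by blast
qed

lemma genus_ge_image:
  fixes B :: "(real^'n::finite) set" and h :: "real^'n \<Rightarrow> real^'n"
  assumes "genus_ge B m" "continuous_on B h" "\<forall>x\<in>B. h (- x) = - h x"
  shows "genus_ge (h ` B) m"
  unfolding genus_ge_def
proof (intro notI, elim exE conjE)
  fix m' and g :: "nat \<Rightarrow> real^'n \<Rightarrow> real"
  assume "m' < m"
    and g: "\<forall>i<m'. continuous_on (h ` B) (g i) \<and> (\<forall>x\<in>h ` B. g i (- x) = - g i x)"
    and nonzero: "\<forall>x\<in>h ` B. \<exists>i<m'. g i x \<noteq> 0"
  have "continuous_on B (g i \<circ> h)" if "i < m'" for i
    using continuous_on_compose[OF assms(2)] g that by blast
  then obtain x where "x \<in> B" "\<forall>i<m'. (g i \<circ> h) x = 0"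
    using genus_ge_odd_map_zero[OF assms(1) \<open>m' < m\<close>, of "\<lambda>i. g i \<circ> h"] g assms(3) by auto
  then show False using nonzero by auto
qed

lemma genus_ge_common_zero:
  fixes B :: "(real^'n::finite) set" and F :: "(real^'n \<Rightarrow> real) set"
  assumes "genus_ge B k" "finite F" "card F < k"
    and "\<forall>g\<in>F. continuous_on B g \<and> (\<forall>x\<in>B. g (- x) = - g x)"
  shows "\<exists>x\<in>B. \<forall>g\<in>F. g x = 0"
proof -
  obtain h where "bij_betw h {..<card F} F"
    using ex_bij_betw_nat_finite[OF assms(2)] by (auto simp: atLeast0LessThan)
  then have range_h: "h ` {..<card F} = F" by (simp add: bij_betw_def)
  then have "\<forall>i<card F. continuous_on B (h i) \<and> (\<forall>x\<in>B. h i (- x) = - h i x)"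
    using assms(4) by auto
  then obtain x where "x \<in> B" and zero: "\<forall>i<card F. h i x = 0"
    using genus_ge_odd_map_zero[OF assms(1,3)] by blast
  have "g x = 0" if "g \<in> F" for g
  proof -
    have "g \<in> h ` {..<card F}" using that range_h by simp
    then show ?thesis using zero by auto
  qed
  then show ?thesis using \<open>x \<in> B\<close> by blast
qed

lemma genus_family_signed_powr_vec_image:
  assumes "p > 0" "q > 0" "B \<in> genus_family \<mu> p m"
  shows "signed_powr_vec (p / q) ` B \<in> genus_family \<mu> q m"
proof -
  have r: "p / q > 0" using assms by simp
  have "B \<subseteq> p_sphere \<mu> p" "closed B" "\<forall>x\<in>B. - x \<in> B" "genus_ge B m"
    using assms(3) by (auto simp: genus_family_def)
  then show ?thesis
    using signed_powr_vec_p_sphere[OF assms(1,2)] closed_signed_powr_vec_image[OF r]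
      genus_ge_image[OF _ continuous_on_signed_powr_vec[OF r]]
    by (auto simp: genus_family_def signed_powr_vec_minus[symmetric])
qed

section \<open>Comparing the Rayleigh quotients for different exponents\<close>

definition potential_bound :: "('n::finite \<Rightarrow> real) \<Rightarrow> ('n \<Rightarrow> real) \<Rightarrow> real" where
  "potential_bound \<mu> \<kappa> = (\<Sum>i\<in>UNIV. \<bar>\<kappa> i\<bar> / \<mu> i)"

lemma abs_potential_le_potential_bound:
  assumes "\<forall>i. \<mu> i > 0" "f \<in> p_sphere \<mu> p"
  shows "\<bar>\<Sum>i\<in>UNIV. \<kappa> i * \<bar>f $ i\<bar> powr p\<bar> \<le> potential_bound \<mu> \<kappa>"
proof -
  have mu_nonneg: "0 \<le> \<mu> i" for i
    using assms(1) less_imp_le by blast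
  have ratio_le: "\<bar>\<kappa> i\<bar> / \<mu> i \<le> potential_bound \<mu> \<kappa>" for i
    unfolding potential_bound_def using assms(1)
    by (intro member_le_sum) (auto intro: divide_nonneg_pos)
  have "\<bar>\<Sum>i\<in>UNIV. \<kappa> i * \<bar>f $ i\<bar> powr p\<bar> \<le> (\<Sum>i\<in>UNIV. \<bar>\<kappa> i\<bar> / \<mu> i * (\<mu> i * \<bar>f $ i\<bar> powr p))"
    using assms(1) by (intro order_trans[OF sum_abs] sum_mono) (simp add: abs_mult less_imp_neq[symmetric])
  also have "\<dots> \<le> (\<Sum>i\<in>UNIV. potential_bound \<mu> \<kappa> * (\<mu> i * \<bar>f $ i\<bar> powr p))"
    by (intro sum_mono mult_right_mono) (simp_all add: ratio_le mu_nonneg)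
  also have "\<dots> = potential_bound \<mu> \<kappa>"
    using assms(2) by (simp add: p_sphere_def sum_distrib_left[symmetric])
  finally show ?thesis .
qed

lemma rayleigh_p_sphere:
  "f \<in> p_sphere \<mu> p \<Longrightarrow> rayleigh E \<sigma> w \<mu> \<kappa> p f =
     (\<Sum>e\<in>E. w e * edge_term \<sigma> p f e) + (\<Sum>i\<in>UNIV. \<kappa> i * \<bar>f $ i\<bar> powr p)"
  by (simp add: rayleigh_def p_sphere_def)

lemma edge_term_nonneg: "edge_term \<sigma> p f e \<ge> 0"
  by (simp add: edge_term_def sum_nonneg)

lemma edge_term_signed_powr_vec_le:
  assumes "0 < p" "p \<le> q" "\<sigma> e = 1 \<or> \<sigma> e = -1"
  shows "edge_term \<sigma> q (signed_powr_vec (p / q) f) e \<le> 2 powr (q - p) * edge_term \<sigma> p f e"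
proof -
  define r where "r = p / q"
  have r: "0 < r" "r \<le> 1" "(1 - r) * q = q - p" "r * q = p"
    using assms by (auto simp: r_def field_simps)
  have "\<bar>signed_powr r x - \<sigma> e * signed_powr r y\<bar> powr q \<le> 2 powr (q - p) * \<bar>x - \<sigma> e * y\<bar> powr p"
    for x y
  proof -
    have "\<sigma> e * signed_powr r y = signed_powr r (\<sigma> e * y)"
      using assms(3) by (auto simp: signed_powr_minus)
    then have "\<bar>signed_powr r x - \<sigma> e * signed_powr r y\<bar> \<le> 2 powr (1 - r) * \<bar>x - \<sigma> e * y\<bar> powr r"
      using signed_powr_hoelder[OF r(1,2)] by simp
    then have "\<bar>signed_powr r x - \<sigma> e * signed_powr r y\<bar> powr q
        \<le> (2 powr (1 - r) * \<bar>x - \<sigma> e * y\<bar> powr r) powr q"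
      using assms by (intro powr_mono2) auto
    then show ?thesis by (simp add: powr_mult powr_powr r(3,4))
  qed
  then show ?thesis
    by (simp add: edge_term_def r_def sum_distrib_left sum_mono divide_right_mono)
qed

lemma rayleigh_signed_powr_vec_le:
  assumes "\<forall>e\<in>E. \<sigma> e = 1 \<or> \<sigma> e = -1" "\<forall>e\<in>E. w e > 0" "\<forall>i. \<mu> i > 0"
    and "0 < p" "p \<le> q" "f \<in> p_sphere \<mu> p"
  shows "rayleigh E \<sigma> w \<mu> \<kappa> q (signed_powr_vec (p / q) f) + potential_bound \<mu> \<kappa>
     \<le> 2 powr (q - p) * (rayleigh E \<sigma> w \<mu> \<kappa> p f + potential_bound \<mu> \<kappa>)"
proof -
  define a where "a = 2 powr (q - p)"
  define pot where "pot = (\<Sum>i\<in>UNIV. \<kappa> i * \<bar>f $ i\<bar> powr p)"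
  have "a \<ge> 1" using assms by (simp add: a_def ge_one_powr_ge_zero)
  have "q > 0" using assms by simp
  have image_sphere: "signed_powr_vec (p / q) f \<in> p_sphere \<mu> q"
    using signed_powr_vec_p_sphere[OF assms(4) \<open>q > 0\<close> assms(6)] .
  have same_potential: "(\<Sum>i\<in>UNIV. \<kappa> i * \<bar>signed_powr_vec (p / q) f $ i\<bar> powr q) = pot"
    using assms \<open>q > 0\<close> by (simp add: pot_def abs_signed_powr powr_powr)
  have "(\<Sum>e\<in>E. w e * edge_term \<sigma> q (signed_powr_vec (p / q) f) e)
      \<le> (\<Sum>e\<in>E. w e * (a * edge_term \<sigma> p f e))"
    using assms(1,2) by (intro sum_mono mult_left_mono) (auto simp: a_def less_imp_le intro: edge_term_signed_powr_vec_le[OF assms(4,5)])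
  moreover have "pot + potential_bound \<mu> \<kappa> \<ge> 0"
    using abs_potential_le_potential_bound[OF assms(3,6), of \<kappa>] by (auto simp: pot_def abs_le_iff)
  ultimately show ?thesis
    using \<open>a \<ge> 1\<close> mult_right_mono[OF \<open>a \<ge> 1\<close>, of "pot + potential_bound \<mu> \<kappa>"]
    unfolding rayleigh_p_sphere[OF image_sphere] rayleigh_p_sphere[OF assms(6)] same_potential
    by (simp add: a_def[symmetric] pot_def[symmetric] sum_distrib_left mult.left_commute distrib_left)
qed

lemma var_eig_step:
  assumes "\<forall>e\<in>E. \<sigma> e = 1 \<or> \<sigma> e = -1" "\<forall>e\<in>E. w e > 0" "\<forall>i. \<mu> i > 0" "0 < p" "p \<le> q"
  shows "var_eig E \<sigma> w \<mu> \<kappa> q m + ereal (potential_bound \<mu> \<kappa>)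
     \<le> ereal (2 powr (q - p)) * (var_eig E \<sigma> w \<mu> \<kappa> p m + ereal (potential_bound \<mu> \<kappa>))"
proof -
  define a where "a = 2 powr (q - p)"
  define M where "M = potential_bound \<mu> \<kappa>"
  let ?V = "\<lambda>p. var_eig E \<sigma> w \<mu> \<kappa> p m"
  have "a > 0" by (simp add: a_def)
  have "q > 0" using assms by simp
  have bound: "?V q + ereal M \<le> ereal (a * (t + M))" if less_t: "?V p < ereal t" for t
  proof -
    obtain B where B: "B \<in> genus_family \<mu> p m"
      and below_t: "(SUP f\<in>B. ereal (rayleigh E \<sigma> w \<mu> \<kappa> p f)) < ereal t"
      using less_t unfolding var_eig_def by (auto simp: INF_less_iff)
    have "?V q \<le> (SUP g\<in>signed_powr_vec (p / q) ` B. ereal (rayleigh E \<sigma> w \<mu> \<kappa> q g))"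
      unfolding var_eig_def
      by (rule INF_lower) (rule genus_family_signed_powr_vec_image[OF assms(4) \<open>q > 0\<close> B])
    also have "\<dots> \<le> ereal (a * (t + M) - M)"
    proof (rule SUP_least, elim imageE)
      fix g f assume "f \<in> B" "g = signed_powr_vec (p / q) f"
      have "f \<in> p_sphere \<mu> p"
        using B \<open>f \<in> B\<close> by (auto simp: genus_family_def)
      then have "rayleigh E \<sigma> w \<mu> \<kappa> q g + M \<le> a * (rayleigh E \<sigma> w \<mu> \<kappa> p f + M)"
        using rayleigh_signed_powr_vec_le[OF assms] \<open>g = _\<close> by (simp add: a_def M_def)
      also have "\<dots> \<le> a * (t + M)"
        using SUP_lessD[OF below_t \<open>f \<in> B\<close>] \<open>a > 0\<close> by simp
      finally show "ereal (rayleigh E \<sigma> w \<mu> \<kappa> q g) \<le> ereal (a * (t + M) - M)"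
        by simp
    qed
    finally show ?thesis by (cases "?V q") auto
  qed
  show ?thesis
    unfolding a_def[symmetric] M_def[symmetric]
  proof (rule dense_ge)
    fix y assume less_y: "ereal a * (?V p + ereal M) < y"
    show "?V q + ereal M \<le> y"
    proof (cases y)
      case (real s)
      have "?V p < ereal (s / a - M)"
        using less_y \<open>a > 0\<close> real by (cases "?V p") (auto simp: field_simps)
      then show ?thesis using bound \<open>a > 0\<close> real by fastforce
    qed (use less_y in auto)
  qed
qed

section \<open>The lower bound from an edge cover\<close>

lemma edge_term_antipodal:
  assumes "\<sigma> {a, b} = 1 \<or> \<sigma> {a, b} = -1" "a \<noteq> b" "f $ a + \<sigma> {a, b} * f $ b = 0"
  shows "edge_term \<sigma> p f {a, b} = 2 powr p / 2 * (\<bar>f $ a\<bar> powr p + \<bar>f $ b\<bar> powr p)"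
proof -
  have doubled: "f $ a - \<sigma> {a, b} * f $ b = 2 * f $ a" "f $ b - \<sigma> {a, b} * f $ a = 2 * f $ b"
    using assms(1,3) by (auto simp: algebra_simps)
  have "edge_term \<sigma> p f {a, b} = (\<bar>2 * f $ a\<bar> powr p + \<bar>2 * f $ b\<bar> powr p) / 2"
    using assms(2) by (simp add: edge_term_def insert_Diff_if doubled)
  then show ?thesis by (simp add: abs_mult powr_mult add_divide_distrib distrib_left)
qed

lemma sum_le_sum_cover:
  fixes g :: "'a::finite \<Rightarrow> real"
  assumes "\<forall>v. 0 \<le> g v" "\<forall>v. g v \<noteq> 0 \<longrightarrow> (\<exists>e\<in>C. v \<in> e)"
  shows "(\<Sum>v\<in>UNIV. g v) \<le> (\<Sum>e\<in>C. \<Sum>v\<in>e. g v)"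
proof -
  have "g v \<le> (\<Sum>e\<in>C. if v \<in> e then g v else 0)" for v
  proof (cases "g v = 0")
    case True
    then show ?thesis using assms(1) by (simp add: sum_nonneg)
  next
    case False
    then obtain e where "e \<in> C" "v \<in> e" using assms(2) by blast
    then have "g v = (if v \<in> e then g v else 0)" by simp
    also have "\<dots> \<le> (\<Sum>e\<in>C. if v \<in> e then g v else 0)"
      by (rule member_le_sum) (use \<open>e \<in> C\<close> assms(1) in auto)
    finally show ?thesis .
  qed
  then have "(\<Sum>v\<in>UNIV. g v) \<le> (\<Sum>v\<in>UNIV. \<Sum>e\<in>C. if v \<in> e then g v else 0)"
    by (rule sum_mono)
  also have "\<dots> = (\<Sum>e\<in>C. \<Sum>v\<in>e. g v)"
    by (subst sum.swap) (simp add: sum.If_cases)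
  finally show ?thesis .
qed

lemma rayleigh_lower_bound:
  fixes E :: "('n::finite) set set"
  assumes "is_edge_set E" "\<forall>e\<in>E. \<sigma> e = 1 \<or> \<sigma> e = -1" "\<forall>e\<in>E. w e > 0" "\<forall>i. \<mu> i > 0"
    and cover: "edge_cover (UNIV - K) E C" and ends: "\<forall>e\<in>C. e = {a e, b e}"
    and "f \<in> p_sphere \<mu> p" "\<forall>v\<in>K. f $ v = 0" "\<forall>e\<in>C. f $ a e + \<sigma> e * f $ b e = 0"
  shows "rayleigh E \<sigma> w \<mu> \<kappa> p f
     \<ge> 2 powr p * (Min (w ` E) / (2 * Max (range \<mu>))) - potential_bound \<mu> \<kappa>"
proof -
  define g where "g v = \<bar>f $ v\<bar> powr p" for v
  define wmin where "wmin = Min (w ` E)"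
  define \<mu>max where "\<mu>max = Max (range \<mu>)"
  have "C \<subseteq> E" using cover by (simp add: edge_cover_def)
  have "\<mu>max > 0" using assms(4) by (auto simp: \<mu>max_def Max_gr_iff)
  have "1 = (\<Sum>v\<in>UNIV. \<mu> v * g v)"
    using assms(7) by (simp add: p_sphere_def g_def)
  also have "\<dots> \<le> (\<Sum>v\<in>UNIV. \<mu>max * g v)"
    unfolding \<mu>max_def g_def by (intro sum_mono mult_right_mono) auto
  also have "\<dots> \<le> \<mu>max * (\<Sum>e\<in>C. \<Sum>v\<in>e. g v)"
    using cover assms(8) \<open>\<mu>max > 0\<close>
    by (auto simp: sum_distrib_left[symmetric] g_def edge_cover_def intro!: sum_le_sum_cover)
  finally have normalisation: "1 / \<mu>max \<le> (\<Sum>e\<in>C. \<Sum>v\<in>e. g v)"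
    using \<open>\<mu>max > 0\<close> by (simp add: field_simps)
  then have "C \<noteq> {}" using \<open>\<mu>max > 0\<close> by auto
  then have "E \<noteq> {}" using \<open>C \<subseteq> E\<close> by blast
  then have "wmin > 0" using assms(3) by (simp add: wmin_def Min_gr_iff)
  have edge_C: "edge_term \<sigma> p f e = 2 powr p / 2 * (\<Sum>v\<in>e. g v)" if "e \<in> C" for e
  proof -
    define x y where "x = a e" and "y = b e"
    have e: "e = {x, y}" using that ends by (simp add: x_def y_def)
    have "x \<noteq> y" using e that \<open>C \<subseteq> E\<close> assms(1) by (force simp: is_edge_set_def)
    have "\<sigma> e = 1 \<or> \<sigma> e = -1" "f $ x + \<sigma> e * f $ y = 0"
      using that \<open>C \<subseteq> E\<close> assms(2,9) by (auto simp: x_def y_def)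
    then have "edge_term \<sigma> p f {x, y} = 2 powr p / 2 * (g x + g y)"
      unfolding e using edge_term_antipodal[OF _ \<open>x \<noteq> y\<close>] by (simp add: g_def)
    then show ?thesis using \<open>x \<noteq> y\<close> by (simp add: e)
  qed
  have "2 powr p * (wmin / (2 * \<mu>max)) = wmin * (2 powr p / 2) * (1 / \<mu>max)" by simp
  also have "\<dots> \<le> wmin * (2 powr p / 2) * (\<Sum>e\<in>C. \<Sum>v\<in>e. g v)"
    using normalisation \<open>wmin > 0\<close> by (intro mult_left_mono) auto
  also have "\<dots> = (\<Sum>e\<in>C. wmin * edge_term \<sigma> p f e)"
    using edge_C by (simp add: sum_distrib_left mult.assoc)
  also have "\<dots> \<le> (\<Sum>e\<in>C. w e * edge_term \<sigma> p f e)"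
    using \<open>C \<subseteq> E\<close> by (intro sum_mono mult_right_mono) (auto simp: wmin_def edge_term_nonneg)
  also have "\<dots> \<le> (\<Sum>e\<in>E. w e * edge_term \<sigma> p f e)"
    using \<open>C \<subseteq> E\<close> assms(3) by (intro sum_mono2) (auto intro: mult_nonneg_nonneg less_imp_le edge_term_nonneg)
  finally show ?thesis
    using abs_potential_le_potential_bound[OF assms(4,7), of \<kappa>]
    unfolding rayleigh_p_sphere[OF assms(7)] wmin_def \<mu>max_def by linarith
qed

lemma var_eig_lower_bound:
  fixes E :: "('n::finite) set set"
  assumes "is_edge_set E" "\<forall>e\<in>E. \<sigma> e = 1 \<or> \<sigma> e = -1" "\<forall>e\<in>E. w e > 0" "\<forall>i. \<mu> i > 0"
    and cover: "edge_cover (UNIV - K) E C"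
  shows "var_eig E \<sigma> w \<mu> \<kappa> p (card C + card K + 1)
     \<ge> ereal (2 powr p * (Min (w ` E) / (2 * Max (range \<mu>))) - potential_bound \<mu> \<kappa>)"
  unfolding var_eig_def
proof (rule INF_greatest)
  fix B assume "B \<in> genus_family \<mu> p (card C + card K + 1)"
  then have genus: "genus_ge B (card C + card K + 1)" and "B \<subseteq> p_sphere \<mu> p"
    by (auto simp: genus_family_def)
  have "\<exists>x y. e = {x, y}" if "e \<in> C" for e
  proof -
    have "card e = 2" using that cover assms(1) by (auto simp: edge_cover_def is_edge_set_def)
    then show ?thesis by (meson card_2_iff)
  qed
  then obtain a b where ends: "\<forall>e\<in>C. e = {a e, b e}" by metis
  define F where "F = (\<lambda>v x. x $ v) ` K \<union> (\<lambda>e x. x $ a e + \<sigma> e * x $ b e) ` C"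
  have "finite F" by (simp add: F_def)
  have "card F \<le> card K + card C"
    unfolding F_def by (rule order_trans[OF card_Un_le add_mono[OF card_image_le card_image_le]]) auto
  then have "card F < card C + card K + 1" by simp
  moreover have "\<forall>g\<in>F. continuous_on B g \<and> (\<forall>x\<in>B. g (- x) = - g x)"
    unfolding F_def by (auto intro!: continuous_intros simp: algebra_simps)
  ultimately obtain f where "f \<in> B" "\<forall>g\<in>F. g f = 0"
    using genus_ge_common_zero[OF genus \<open>finite F\<close>] by blast
  then have "f \<in> p_sphere \<mu> p" "\<forall>v\<in>K. f $ v = 0" "\<forall>e\<in>C. f $ a e + \<sigma> e * f $ b e = 0"
    using \<open>B \<subseteq> p_sphere \<mu> p\<close> by (auto simp: F_def)
  from rayleigh_lower_bound[OF assms ends this]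
  show "ereal (2 powr p * (Min (w ` E) / (2 * Max (range \<mu>))) - potential_bound \<mu> \<kappa>)
      \<le> (SUP f\<in>B. ereal (rayleigh E \<sigma> w \<mu> \<kappa> p f))"
    using \<open>f \<in> B\<close> by (intro SUP_upper2[of f]) auto
qed

section \<open>The limit\<close>

lemma antimono_tendsto_INF:
  fixes u :: "real \<Rightarrow> 'a::{complete_linorder, linorder_topology}"
  assumes "\<And>p q. p0 \<le> p \<Longrightarrow> p \<le> q \<Longrightarrow> u q \<le> u p"
  shows "(u \<longlongrightarrow> (INF p\<in>{p0..}. u p)) at_top"
proof (rule order_tendstoI)
  fix y assume "y < (INF p\<in>{p0..}. u p)"
  then have "y < u p" if "p0 \<le> p" for p
    using that by (auto intro: less_INF_D)
  then show "eventually (\<lambda>p. y < u p) at_top"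
    by (auto simp: eventually_at_top_linorder)
next
  fix y assume "(INF p\<in>{p0..}. u p) < y"
  then obtain p1 where "p0 \<le> p1" "u p1 < y" by (auto simp: INF_less_iff)
  then show "eventually (\<lambda>p. u p < y) at_top"
    using assms by (auto simp: eventually_at_top_linorder intro: le_less_trans)
qed

lemma cutoff_eig_lower_bound:
  fixes E :: "('n::finite) set set"
  assumes "is_edge_set E" "\<forall>e\<in>E. \<sigma> e = 1 \<or> \<sigma> e = -1" "\<forall>e\<in>E. w e > 0" "\<forall>i. \<mu> i > 0"
    and "edge_cover (UNIV - K) E C"
  shows "cutoff_eig E \<sigma> w \<mu> \<kappa> (card C + card K + 1)
     \<ge> ereal (Min (w ` E) / (2 * Max (range \<mu>)))"
proof -
  define V where "V p = var_eig E \<sigma> w \<mu> \<kappa> p (card C + card K + 1)" for p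
  define c where "c = Min (w ` E) / (2 * Max (range \<mu>))"
  define M where "M = potential_bound \<mu> \<kappa>"
  define u where "u p = ereal (2 powr - p) * (V p + ereal M)" for p
  have V_lower: "ereal (2 powr p * c - M) \<le> V p" for p
    unfolding V_def c_def M_def by (rule var_eig_lower_bound[OF assms])
  have u_antimono: "u q \<le> u p" if "1 \<le> p" "p \<le> q" for p q
  proof -
    have "u q \<le> ereal (2 powr - q) * (ereal (2 powr (q - p)) * (V p + ereal M))"
      unfolding u_def V_def M_def using that
      by (intro ereal_mult_left_mono var_eig_step[OF assms(2-4)]) auto
    also have "\<dots> = u p"
      by (simp add: u_def mult.assoc[symmetric] powr_add[symmetric])
    finally show ?thesis .
  qed
  have u_lower: "ereal c \<le> u p" for p
  proof -
    have "ereal (2 powr p * c) \<le> V p + ereal M"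
      using add_right_mono[OF V_lower[of p], of "ereal M"] by simp
    then have "ereal (2 powr - p) * ereal (2 powr p * c) \<le> u p"
      unfolding u_def by (rule ereal_mult_left_mono) simp
    then show ?thesis by (simp add: powr_minus field_simps)
  qed
  have V_eq: "ereal (2 powr - p) * V p = u p - ereal (2 powr - p * M)" for p
    using V_lower[of p] unfolding u_def
    by (cases "V p") (simp_all add: algebra_simps)
  define L where "L = (INF p\<in>{1..}. u p)"
  have "(u \<longlongrightarrow> L) at_top"
    unfolding L_def using u_antimono by (rule antimono_tendsto_INF)
  moreover have "((\<lambda>p. ereal (2 powr - p * M)) \<longlongrightarrow> ereal 0) at_top"
    by (intro tendsto_ereal) real_asymp
  ultimately have "((\<lambda>p. u p - ereal (2 powr - p * M)) \<longlongrightarrow> L - ereal 0) at_top"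
    by (intro tendsto_diff_ereal_general) auto
  then have "((\<lambda>p. ereal (2 powr - p) * V p) \<longlongrightarrow> L) at_top"
    by (simp add: V_eq zero_ereal_def[symmetric])
  then have "cutoff_eig E \<sigma> w \<mu> \<kappa> (card C + card K + 1) = L"
    unfolding cutoff_eig_def V_def[symmetric] by (rule tendsto_Lim[rotated]) simp
  moreover have "ereal c \<le> L"
    unfolding L_def by (rule INF_greatest) (rule u_lower)
  ultimately show ?thesis by (simp add: c_def)
qed

theorem lemma6p5:
  fixes E :: "('n::finite) set set"
    and \<sigma> w :: "'n set \<Rightarrow> real"
    and \<mu> \<kappa> :: "'n \<Rightarrow> real"
    and K :: "'n set" and k \<beta>' :: nat and C :: "'n set set"
  assumes "is_edge_set E"
    and "E \<noteq> {}"
    and "\<forall>e\<in>E. \<sigma> e = 1 \<or> \<sigma> e = -1"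
    and "\<forall>e\<in>E. w e > 0"
    and "\<forall>i. \<mu> i > 0"
    and "card K = k"
    and "min_edge_cover (UNIV - K) {e\<in>E. e \<subseteq> UNIV - K} C"
    and "card C = \<beta>'"
  shows "cutoff_eig E \<sigma> w \<mu> \<kappa> (\<beta>' + k + 1)
           \<ge> ereal ((1/2) * (Min (w ` E) / Max (range \<mu>)))
         \<and> Min (w ` E) / Max (range \<mu>) > 0"
proof
  (* only the covering property of C is used, not its minimality *)
  have "edge_cover (UNIV - K) E C"
    using assms(7) by (auto simp: min_edge_cover_def edge_cover_def)
  from cutoff_eig_lower_bound[OF assms(1,3-5) this, of \<kappa>]
  show "cutoff_eig E \<sigma> w \<mu> \<kappa> (\<beta>' + k + 1) \<ge> ereal ((1/2) * (Min (w ` E) / Max (range \<mu>)))"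
    using assms(6,8) by simp
next
  have "0 < Min (w ` E)" using assms(2,4) by (simp add: Min_gr_iff)
  moreover have "0 < Max (range \<mu>)" using assms(5) by (simp add: Max_gr_iff)
  ultimately show "Min (w ` E) / Max (range \<mu>) > 0" by simp
qed

end
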